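(* Let $X$ be a compactum, let $n\geq2$, and let $f:X\to X$ be a function. Consider the statements: (1) $f$ is multi-transitive; (2) $F_n(f)$ is multi-transitive; (3) $SF_n(f)$ is multi-transitive. Then (2) and (3) are equivalent, and (2) implies (1).
   Context: A compactum is a nondegenerate compact, perfect, Hausdorff topological space. $F_n(X)$ is the set of nonempty subsets of $X$ with at most $n$ points, with the Vietoris topology; $F_1(X)=\{\{x\}:x\in X\}$; $F_n(f)(A)=f(A)$. $SF_n(X)=F_n(X)/F_1(X)$ is the quotient collapsing $F_1(X)$ to a point, $q$ the quotient map, $F_X=q(F_1(X))$, and $SF_n(f)(\chi)=q(F_n(f)(q^{-1}(\chi)))$ for $\chi\neq F_X$, $SF_n(f)(F_X)=F_X$. A function $g:Z\to Z$ is transitive if for all nonempty open $U,V\subseteq Z$ there is $k\in\mathbb{N}$ with $g^k(U)\cap V\neq\emptyset$; $g$ is multi-transitive if for every $m\in\mathbb{N}$ the product $g\times g^2\times\cdots\times g^m:Z^m\to Z^m$ is transitive. *)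

theory Defs
  imports "HOL-Analysis.Analysis"
begin

definition compactum :: "'a topology \<Rightarrow> bool" where
  "compactum X \<longleftrightarrow> compact_space X \<and> Hausdorff_space X \<and>
     X derived_set_of topspace X = topspace X \<and>
     (\<exists>x\<in>topspace X. \<exists>y\<in>topspace X. x \<noteq> y)"

definition Fn_set :: "nat \<Rightarrow> 'a topology \<Rightarrow> 'a set set" where
  "Fn_set n X = {A. A \<subseteq> topspace X \<and> A \<noteq> {} \<and> finite A \<and> card A \<le> n}"

text \<open>Vietoris topology on F_n(X) (as subspace of the hyperspace): generated by
  the subbasic sets <U> = {A. A \<subseteq> U} and [U] = {A. A \<inter> U \<noteq> {}}, U open in X.\<close>
definition Fn :: "nat \<Rightarrow> 'a topology \<Rightarrow> 'a set topology" where
  "Fn n X = topology_generated_by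
     ((\<lambda>U. {A \<in> Fn_set n X. A \<subseteq> U}) ` {U. openin X U} \<union>
      (\<lambda>U. {A \<in> Fn_set n X. A \<inter> U \<noteq> {}}) ` {U. openin X U})"

definition Fn_map :: "('a \<Rightarrow> 'a) \<Rightarrow> 'a set \<Rightarrow> 'a set" where
  "Fn_map f A = f ` A"

definition F1_set :: "'a topology \<Rightarrow> 'a set set" where
  "F1_set X = {{x} | x. x \<in> topspace X}"

definition quotient_topology :: "'b topology \<Rightarrow> ('b \<Rightarrow> 'c) \<Rightarrow> 'c topology" where
  "quotient_topology Z q = topology (\<lambda>U. U \<subseteq> q ` topspace Z \<and>
       openin Z {z \<in> topspace Z. q z \<in> U})"

lemma istopology_quotient:
  "istopology (\<lambda>U. U \<subseteq> q ` topspace Z \<and> openin Z {z \<in> topspace Z. q z \<in> U})"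
  unfolding istopology_def
proof (rule conjI; intro allI impI)
  fix S T assume hS: "S \<subseteq> q ` topspace Z \<and> openin Z {z \<in> topspace Z. q z \<in> S}"
    and hT: "T \<subseteq> q ` topspace Z \<and> openin Z {z \<in> topspace Z. q z \<in> T}"
  have e: "{z \<in> topspace Z. q z \<in> S \<inter> T} = {z \<in> topspace Z. q z \<in> S} \<inter> {z \<in> topspace Z. q z \<in> T}"
    by auto
  show "S \<inter> T \<subseteq> q ` topspace Z \<and> openin Z {z \<in> topspace Z. q z \<in> S \<inter> T}"
    unfolding e using hS hT by auto
next
  fix K assume K: "\<forall>S\<in>K. S \<subseteq> q ` topspace Z \<and> openin Z {z \<in> topspace Z. q z \<in> S}"
  have e: "{z \<in> topspace Z. q z \<in> \<Union>K} = (\<Union>S\<in>K. {z \<in> topspace Z. q z \<in> S})" by auto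
  show "\<Union>K \<subseteq> q ` topspace Z \<and> openin Z {z \<in> topspace Z. q z \<in> \<Union>K}"
    unfolding e using K by auto
qed

lemma openin_quotient_topology:
  "openin (quotient_topology Z q) U \<longleftrightarrow>
     U \<subseteq> q ` topspace Z \<and> openin Z {z \<in> topspace Z. q z \<in> U}"
  unfolding quotient_topology_def using istopology_quotient by (simp add: topology_inverse'[OF istopology_quotient])

text \<open>The quotient map q: each point of F_n(X) is sent to its equivalence class,
  where the only nontrivial class is F_1(X) itself.\<close>
definition SF_q :: "nat \<Rightarrow> 'a topology \<Rightarrow> 'a set \<Rightarrow> 'a set set" where
  "SF_q n X A = (if A \<in> F1_set X then F1_set X else {A})"

definition SFn :: "nat \<Rightarrow> 'a topology \<Rightarrow> 'a set set topology" where
  "SFn n X = quotient_topology (Fn n X) (SF_q n X)"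

definition SF_base :: "nat \<Rightarrow> 'a topology \<Rightarrow> 'a set set" where
  "SF_base n X = F1_set X"

text \<open>SF_n(f)(chi) = q(F_n(f)(q^{-1}(chi))) for chi \<noteq> F_X (q^{-1}(chi) is a single
  point then), and SF_n(f)(F_X) = F_X.\<close>
definition SFn_map :: "nat \<Rightarrow> 'a topology \<Rightarrow> ('a \<Rightarrow> 'a) \<Rightarrow> 'a set set \<Rightarrow> 'a set set" where
  "SFn_map n X f c = (if c = SF_base n X then SF_base n X
     else SF_q n X (Fn_map f (THE A. A \<in> topspace (Fn n X) \<and> SF_q n X A = c)))"

definition transitive_on :: "'b topology \<Rightarrow> ('b \<Rightarrow> 'b) \<Rightarrow> bool" where
  "transitive_on Z g \<longleftrightarrow>
     (\<forall>U V. openin Z U \<and> U \<noteq> {} \<and> openin Z V \<and> V \<noteq> {} \<longrightarrow>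
        (\<exists>k::nat. k \<ge> 1 \<and> (g ^^ k) ` U \<inter> V \<noteq> {}))"

text \<open>The product g \<times> g^2 \<times> ... \<times> g^m on Z^m, with Z^m the product topology
  indexed by {0..<m} (coordinate i carries g^(i+1)).\<close>
definition prod_iter_map :: "nat \<Rightarrow> ('b \<Rightarrow> 'b) \<Rightarrow> (nat \<Rightarrow> 'b) \<Rightarrow> (nat \<Rightarrow> 'b)" where
  "prod_iter_map m g x = (\<lambda>i\<in>{..<m}. (g ^^ Suc i) (x i))"

definition multi_transitive_on :: "'b topology \<Rightarrow> ('b \<Rightarrow> 'b) \<Rightarrow> bool" where
  "multi_transitive_on Z g \<longleftrightarrow>
     (\<forall>m::nat. m \<ge> 1 \<longrightarrow>
        transitive_on (product_topology (\<lambda>_. Z) {..<m}) (prod_iter_map m g))"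

end

theory Submission
  imports Defs
begin

text \<open>Multi-transitivity of g only has to be tested on products of open boxes
  U_0 x ... x U_(m-1), and in this form it passes from (Z, g) to (W, g') along any
  rule \<Phi> assigning to each nonempty open U of W a nonempty open \<Phi> U of Z such that
  an orbit of g from \<Phi> U into \<Phi> V yields an orbit of g' from U into V with the same
  number of steps. For F_n(X) to X take \<Phi> U = <U>; for F_n(X) to SF_n(X) take
  preimages under the quotient map q, which semiconjugates F_n(f) to SF_n(f); for
  SF_n(X) to F_n(X) take \<Phi> U = q(U - F_1(X)). The last set is open because F_1(X)
  is closed when X is Hausdorff and q is injective off F_1(X), and it is nonempty
  because X is perfect and n \<ge> 2, so every neighbourhood of a singleton {x} contains
  two-point sets.\<close>

definition box_transitive :: "'b topology \<Rightarrow> ('b \<Rightarrow> 'b) \<Rightarrow> nat \<Rightarrow> bool" where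
  "box_transitive Z g m \<longleftrightarrow>
     (\<forall>U V. (\<forall>i<m. openin Z (U i) \<and> U i \<noteq> {} \<and> openin Z (V i) \<and> V i \<noteq> {}) \<longrightarrow>
        (\<exists>k\<ge>1. \<forall>i<m. \<exists>x\<in>U i. (g ^^ (Suc i * k)) x \<in> V i))"

lemma funpow_prod_iter_map:
  assumes "k \<ge> 1"
  shows "(prod_iter_map m g ^^ k) x = (\<lambda>i\<in>{..<m}. (g ^^ (Suc i * k)) (x i))"
  using assms
proof (induction k rule: dec_induct)
  case base
  then show ?case by (simp add: prod_iter_map_def)
next
  case (step j)
  have "(prod_iter_map m g ^^ Suc j) x = prod_iter_map m g (\<lambda>i\<in>{..<m}. (g ^^ (Suc i * j)) (x i))"
    by (simp only: funpow.simps comp_apply step.IH)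
  also have "\<dots> = (\<lambda>i\<in>{..<m}. (g ^^ (Suc i * Suc j)) (x i))"
    unfolding prod_iter_map_def by (rule restrict_ext) (simp add: funpow_add)
  finally show ?case .
qed

lemma transitive_on_prod_iter_map_iff:
  "transitive_on (product_topology (\<lambda>_. Z) {..<m}) (prod_iter_map m g) \<longleftrightarrow> box_transitive Z g m"
  (is "transitive_on ?P ?g \<longleftrightarrow> _")
proof
  assume trans: "transitive_on ?P ?g"
  show "box_transitive Z g m"
    unfolding box_transitive_def
  proof (intro allI impI)
    fix U V :: "nat \<Rightarrow> _"
    assume "\<forall>i<m. openin Z (U i) \<and> U i \<noteq> {} \<and> openin Z (V i) \<and> V i \<noteq> {}"
    then have UV_box: "openin ?P (PiE {..<m} U) \<and> PiE {..<m} U \<noteq> {} \<and>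
        openin ?P (PiE {..<m} V) \<and> PiE {..<m} V \<noteq> {}"
      by (simp add: openin_PiE_gen PiE_eq_empty_iff)
    then have "\<exists>k\<ge>1. (?g ^^ k) ` PiE {..<m} U \<inter> PiE {..<m} V \<noteq> {}"
      by (rule trans[unfolded transitive_on_def, rule_format])
    then obtain k y where k: "k \<ge> 1"
      and y: "y \<in> PiE {..<m} U" "(?g ^^ k) y \<in> PiE {..<m} V"
      by (auto simp only: disjoint_iff image_iff)
    have "\<forall>i<m. y i \<in> U i \<and> (g ^^ (Suc i * k)) (y i) \<in> V i"
      using y by (simp add: funpow_prod_iter_map[OF k(1)] PiE_iff)
    with k show "\<exists>k\<ge>1. \<forall>i<m. \<exists>x\<in>U i. (g ^^ (Suc i * k)) x \<in> V i"
      by blast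
  qed
next
  assume box: "box_transitive Z g m"
  show "transitive_on ?P ?g"
    unfolding transitive_on_def
  proof (intro allI impI, elim conjE)
    fix U V
    assume U: "openin ?P U" "U \<noteq> {}" and V: "openin ?P V" "V \<noteq> {}"
    obtain x y where "x \<in> U" "y \<in> V"
      using U V by blast
    obtain BU where BU: "x \<in> PiE {..<m} BU" "\<forall>i. openin Z (BU i)" "PiE {..<m} BU \<subseteq> U"
      using product_topology_open_contains_basis[OF U(1) \<open>x \<in> U\<close>] by blast
    obtain BV where BV: "y \<in> PiE {..<m} BV" "\<forall>i. openin Z (BV i)" "PiE {..<m} BV \<subseteq> V"
      using product_topology_open_contains_basis[OF V(1) \<open>y \<in> V\<close>] by blast
    have "\<forall>i<m. openin Z (BU i) \<and> BU i \<noteq> {} \<and> openin Z (BV i) \<and> BV i \<noteq> {}"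
      using BU BV by (auto simp: PiE_iff)
    then obtain k where k: "k \<ge> 1" "\<forall>i<m. \<exists>x\<in>BU i. (g ^^ (Suc i * k)) x \<in> BV i"
      using box[unfolded box_transitive_def, rule_format, of BU BV] by blast
    then obtain a where a: "\<forall>i<m. a i \<in> BU i \<and> (g ^^ (Suc i * k)) (a i) \<in> BV i"
      by metis
    have "restrict a {..<m} \<in> PiE {..<m} BU" "(?g ^^ k) (restrict a {..<m}) \<in> PiE {..<m} BV"
      using a by (simp_all add: funpow_prod_iter_map[OF k(1)] restrict_PiE_iff)
    then have "restrict a {..<m} \<in> U" "(?g ^^ k) (restrict a {..<m}) \<in> V"
      using BU(3) BV(3) by blast+
    with k(1) show "\<exists>k\<ge>1. (?g ^^ k) ` U \<inter> V \<noteq> {}"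
      by blast
  qed
qed

lemma multi_transitive_on_iff_box_transitive:
  "multi_transitive_on Z g \<longleftrightarrow> (\<forall>m\<ge>1. box_transitive Z g m)"
  unfolding multi_transitive_on_def transitive_on_prod_iter_map_iff ..

lemma multi_transitive_on_transfer:
  assumes "multi_transitive_on Z g"
    and open_nonempty: "\<And>U. openin W U \<Longrightarrow> U \<noteq> {} \<Longrightarrow> openin Z (\<Phi> U) \<and> \<Phi> U \<noteq> {}"
    and orbit: "\<And>U V z j. openin W U \<Longrightarrow> openin W V \<Longrightarrow> z \<in> \<Phi> U \<Longrightarrow> (g ^^ j) z \<in> \<Phi> V \<Longrightarrow>
      \<exists>x\<in>U. (g' ^^ j) x \<in> V"
  shows "multi_transitive_on W g'"
  unfolding multi_transitive_on_iff_box_transitive box_transitive_def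
proof (intro allI impI)
  fix m :: nat and U V :: "nat \<Rightarrow> _"
  assume "m \<ge> 1" and UV: "\<forall>i<m. openin W (U i) \<and> U i \<noteq> {} \<and> openin W (V i) \<and> V i \<noteq> {}"
  then have box: "box_transitive Z g m"
    using assms(1) by (simp add: multi_transitive_on_iff_box_transitive)
  have "openin Z (\<Phi> (U i)) \<and> \<Phi> (U i) \<noteq> {} \<and> openin Z (\<Phi> (V i)) \<and> \<Phi> (V i) \<noteq> {}"
    if "i < m" for i
    using UV that open_nonempty by simp
  from box[unfolded box_transitive_def, rule_format, of "\<lambda>i. \<Phi> (U i)" "\<lambda>i. \<Phi> (V i)", OF this]
  obtain k where k: "k \<ge> 1" "\<forall>i<m. \<exists>z\<in>\<Phi> (U i). (g ^^ (Suc i * k)) z \<in> \<Phi> (V i)"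
    by blast
  have "\<exists>x\<in>U i. (g' ^^ (Suc i * k)) x \<in> V i" if "i < m" for i
  proof -
    obtain z where "z \<in> \<Phi> (U i)" "(g ^^ (Suc i * k)) z \<in> \<Phi> (V i)"
      using k(2) \<open>i < m\<close> by blast
    then show ?thesis
      using orbit UV \<open>i < m\<close> by blast
  qed
  with k(1) show "\<exists>k\<ge>1. \<forall>i<m. \<exists>x\<in>U i. (g' ^^ (Suc i * k)) x \<in> V i"
    by blast
qed

lemma topspace_Fn: "topspace (Fn n X) = Fn_set n X"
proof -
  have "Fn_set n X = {A \<in> Fn_set n X. A \<subseteq> topspace X}"
    by (auto simp: Fn_set_def)
  then have "Fn_set n X \<in> (\<lambda>U. {A \<in> Fn_set n X. A \<subseteq> U}) ` {U. openin X U}"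
    by blast
  then show ?thesis
    unfolding Fn_def topology_generated_by_topspace by blast
qed

lemma openin_Fn_subset: "openin X U \<Longrightarrow> openin (Fn n X) {A \<in> Fn_set n X. A \<subseteq> U}"
  unfolding Fn_def by (rule topology_generated_by_Basis) blast

lemma openin_Fn_meets: "openin X U \<Longrightarrow> openin (Fn n X) {A \<in> Fn_set n X. A \<inter> U \<noteq> {}}"
  unfolding Fn_def by (rule topology_generated_by_Basis) blast

lemma openin_Fn_singleton_nhood:
  assumes "openin (Fn n X) W" "{x} \<in> W"
  obtains N where "openin X N" "x \<in> N" "\<And>B. B \<in> Fn_set n X \<Longrightarrow> x \<in> B \<Longrightarrow> B \<subseteq> N \<Longrightarrow> B \<in> W"
proof -
  have "generate_topology_on ((\<lambda>U. {A \<in> Fn_set n X. A \<subseteq> U}) ` {U. openin X U} \<union>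
      (\<lambda>U. {A \<in> Fn_set n X. A \<inter> U \<noteq> {}}) ` {U. openin X U}) W"
    using assms(1) unfolding Fn_def by (rule openin_topology_generated_by)
  then have "\<exists>N. openin X N \<and> x \<in> N \<and> (\<forall>B\<in>Fn_set n X. x \<in> B \<and> B \<subseteq> N \<longrightarrow> B \<in> W)"
    using assms(2)
  proof (induction arbitrary: x)
    case Empty
    then show ?case by simp
  next
    case (Int a b)
    then have "{x} \<in> a" "{x} \<in> b"
      by simp_all
    obtain Na where "openin X Na" "x \<in> Na" "\<forall>B\<in>Fn_set n X. x \<in> B \<and> B \<subseteq> Na \<longrightarrow> B \<in> a"
      using Int.IH(1)[OF \<open>{x} \<in> a\<close>] by blast
    moreover obtain Nb where "openin X Nb" "x \<in> Nb" "\<forall>B\<in>Fn_set n X. x \<in> B \<and> B \<subseteq> Nb \<longrightarrow> B \<in> b"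
      using Int.IH(2)[OF \<open>{x} \<in> b\<close>] by blast
    ultimately show ?case
      by (intro exI[of _ "Na \<inter> Nb"]) auto
  next
    case (UN K)
    then obtain k where "k \<in> K" "{x} \<in> k"
      by blast
    with UN.IH show ?case
      by (meson UnionI)
  next
    case (Basis s)
    then obtain U where "openin X U" "s = {A \<in> Fn_set n X. A \<subseteq> U} \<or> s = {A \<in> Fn_set n X. A \<inter> U \<noteq> {}}"
      by blast
    with Basis.prems show ?case
      by (intro exI[of _ U]) auto
  qed
  then show ?thesis
    using that by blast
qed

lemma funpow_Fn_map: "(Fn_map f ^^ j) A = (f ^^ j) ` A"
  by (induction j) (auto simp: Fn_map_def image_comp)

lemma Fn_map_in_Fn_set:
  assumes "f ` topspace X \<subseteq> topspace X" "A \<in> Fn_set n X"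
  shows "Fn_map f A \<in> Fn_set n X"
  using assms card_image_le[of A f] by (auto simp: Fn_set_def Fn_map_def)

lemma non_singleton_in_open_Fn:
  assumes perfect: "X derived_set_of topspace X = topspace X"
    and "n \<ge> 2" "openin (Fn n X) W" "W \<noteq> {}"
  shows "W - F1_set X \<noteq> {}"
proof
  assume "W - F1_set X = {}"
  with \<open>W \<noteq> {}\<close> obtain x where x: "x \<in> topspace X" "{x} \<in> W"
    by (auto simp: F1_set_def)
  obtain N where N: "openin X N" "x \<in> N" "\<And>B. B \<in> Fn_set n X \<Longrightarrow> x \<in> B \<Longrightarrow> B \<subseteq> N \<Longrightarrow> B \<in> W"
    using openin_Fn_singleton_nhood[OF assms(3) x(2)] by blast
  have "x \<in> X derived_set_of topspace X"
    using perfect x(1) by simp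
  then obtain y where y: "y \<noteq> x" "y \<in> topspace X" "y \<in> N"
    using N(1,2) unfolding in_derived_set_of by blast
  have "{x, y} \<in> Fn_set n X"
    using x y \<open>n \<ge> 2\<close> by (auto simp: Fn_set_def card_insert_if)
  then have "{x, y} \<in> W"
    using N y by blast
  moreover have "{x, y} \<notin> F1_set X"
    using y(1) by (auto simp: F1_set_def doubleton_eq_iff)
  ultimately show False
    using \<open>W - F1_set X = {}\<close> by blast
qed

lemma openin_Fn_non_singletons:
  assumes "Hausdorff_space X"
  shows "openin (Fn n X) (Fn_set n X - F1_set X)"
proof (subst openin_subopen, intro ballI)
  fix A
  assume A: "A \<in> Fn_set n X - F1_set X"
  then have "A \<subseteq> topspace X" "A \<noteq> {}"
    by (simp_all add: Fn_set_def)
  then obtain a where "a \<in> A" "{a} \<in> F1_set X"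
    by (auto simp: F1_set_def)
  with A have "A \<noteq> {a}"
    by auto
  with \<open>a \<in> A\<close> obtain b where b: "b \<in> A" "a \<noteq> b"
    by blast
  have "a \<in> topspace X" "b \<in> topspace X"
    using \<open>a \<in> A\<close> b(1) \<open>A \<subseteq> topspace X\<close> by auto
  with b(2) obtain Ua Ub where U: "openin X Ua" "openin X Ub" "a \<in> Ua" "b \<in> Ub" "disjnt Ua Ub"
    using assms by (metis Hausdorff_space_def)
  define T where "T = {B \<in> Fn_set n X. B \<inter> Ua \<noteq> {}} \<inter> {B \<in> Fn_set n X. B \<inter> Ub \<noteq> {}}"
  have "openin (Fn n X) T"
    unfolding T_def using U by (intro openin_Int openin_Fn_meets)
  moreover have "A \<in> T"
    unfolding T_def using A \<open>a \<in> A\<close> b(1) U by auto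
  moreover have "T \<subseteq> Fn_set n X - F1_set X"
    using U(5) by (auto simp: T_def F1_set_def disjnt_def)
  ultimately show "\<exists>T. openin (Fn n X) T \<and> A \<in> T \<and> T \<subseteq> Fn_set n X - F1_set X"
    by blast
qed

lemma SF_q_eq_non_singleton:
  assumes "B \<notin> F1_set X" "SF_q n X A = SF_q n X B"
  shows "A = B"
  using assms by (auto simp: SF_q_def split: if_splits)

lemma SFn_map_SF_q:
  assumes "f ` topspace X \<subseteq> topspace X" "A \<in> Fn_set n X"
  shows "SFn_map n X f (SF_q n X A) = SF_q n X (Fn_map f A)"
proof (cases "A \<in> F1_set X")
  case True
  with assms(1) have "Fn_map f A \<in> F1_set X"
    by (auto simp: F1_set_def Fn_map_def)
  with True show ?thesis
    by (simp add: SFn_map_def SF_q_def SF_base_def)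
next
  case False
  have "(THE B. B \<in> topspace (Fn n X) \<and> SF_q n X B = SF_q n X A) = A"
    using assms(2) SF_q_eq_non_singleton[OF False]
    by (intro the_equality) (auto simp: topspace_Fn)
  moreover have "SF_q n X A \<noteq> SF_base n X"
    using False by (auto simp: SF_q_def SF_base_def)
  ultimately show ?thesis
    by (simp add: SFn_map_def)
qed

lemma funpow_semiconj_on:
  assumes "g ` S \<subseteq> S" "\<And>x. x \<in> S \<Longrightarrow> h (g x) = g' (h x)" "x \<in> S"
  shows "h ((g ^^ j) x) = (g' ^^ j) (h x)"
  using assms(3)
proof (induction j arbitrary: x)
  case 0
  then show ?case by simp
next
  case (Suc j)
  have "h ((g ^^ Suc j) x) = h ((g ^^ j) (g x))"
    by (simp only: funpow_Suc_right comp_apply)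
  also have "\<dots> = (g' ^^ j) (h (g x))"
    using Suc assms(1) by blast
  also have "\<dots> = (g' ^^ Suc j) (h x)"
    by (simp only: funpow_Suc_right comp_apply assms(2)[OF Suc.prems])
  finally show ?case .
qed

lemma funpow_SFn_map_SF_q:
  assumes "f ` topspace X \<subseteq> topspace X" "A \<in> Fn_set n X"
  shows "(SFn_map n X f ^^ j) (SF_q n X A) = SF_q n X ((Fn_map f ^^ j) A)"
  using funpow_semiconj_on[of "Fn_map f" "Fn_set n X" "SF_q n X" "SFn_map n X f", OF _ _ assms(2)]
    Fn_map_in_Fn_set[OF assms(1)] SFn_map_SF_q[OF assms(1)] by (metis image_subsetI)

lemma openin_SFn_image_non_singletons:
  assumes "Hausdorff_space X" "openin (Fn n X) U"
  shows "openin (SFn n X) (SF_q n X ` (U - F1_set X))"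
proof -
  have U: "U \<subseteq> Fn_set n X"
    using openin_subset[OF assms(2)] by (simp add: topspace_Fn)
  then have "{A \<in> Fn_set n X. SF_q n X A \<in> SF_q n X ` (U - F1_set X)} = U \<inter> (Fn_set n X - F1_set X)"
    using SF_q_eq_non_singleton by blast
  moreover have "openin (Fn n X) (U \<inter> (Fn_set n X - F1_set X))"
    using assms by (intro openin_Int openin_Fn_non_singletons)
  ultimately show ?thesis
    using U unfolding SFn_def openin_quotient_topology topspace_Fn by auto
qed

lemma multi_transitive_on_from_Fn:
  assumes "n \<ge> 1" "multi_transitive_on (Fn n X) (Fn_map f)"
  shows "multi_transitive_on X f"
proof (rule multi_transitive_on_transfer[OF assms(2), where \<Phi> = "\<lambda>U. {A \<in> Fn_set n X. A \<subseteq> U}"])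
  fix U
  assume "openin X U" "U \<noteq> {}"
  then obtain x where "x \<in> U" "x \<in> topspace X"
    using openin_subset by blast
  then have "{x} \<in> {A \<in> Fn_set n X. A \<subseteq> U}"
    using assms(1) by (simp add: Fn_set_def)
  with openin_Fn_subset[OF \<open>openin X U\<close>]
  show "openin (Fn n X) {A \<in> Fn_set n X. A \<subseteq> U} \<and> {A \<in> Fn_set n X. A \<subseteq> U} \<noteq> {}"
    by blast
next
  fix U V z j
  assume "z \<in> {A \<in> Fn_set n X. A \<subseteq> U}" "(Fn_map f ^^ j) z \<in> {A \<in> Fn_set n X. A \<subseteq> V}"
  then show "\<exists>x\<in>U. (f ^^ j) x \<in> V"
    by (fastforce simp: funpow_Fn_map Fn_set_def)
qed

lemma multi_transitive_on_SFn_if_Fn: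
  assumes "f ` topspace X \<subseteq> topspace X" "multi_transitive_on (Fn n X) (Fn_map f)"
  shows "multi_transitive_on (SFn n X) (SFn_map n X f)"
proof (rule multi_transitive_on_transfer[OF assms(2), where \<Phi> = "\<lambda>U. {A \<in> Fn_set n X. SF_q n X A \<in> U}"])
  fix U
  assume "openin (SFn n X) U" "U \<noteq> {}"
  then show "openin (Fn n X) {A \<in> Fn_set n X. SF_q n X A \<in> U} \<and> {A \<in> Fn_set n X. SF_q n X A \<in> U} \<noteq> {}"
    unfolding SFn_def openin_quotient_topology topspace_Fn by blast
next
  fix U V z j
  assume "z \<in> {A \<in> Fn_set n X. SF_q n X A \<in> U}" "(Fn_map f ^^ j) z \<in> {A \<in> Fn_set n X. SF_q n X A \<in> V}"
  then have "SF_q n X z \<in> U" "(SFn_map n X f ^^ j) (SF_q n X z) \<in> V"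
    using funpow_SFn_map_SF_q[OF assms(1), of z n j] by auto
  then show "\<exists>x\<in>U. (SFn_map n X f ^^ j) x \<in> V"
    by blast
qed

lemma multi_transitive_on_Fn_if_SFn:
  assumes "Hausdorff_space X" "X derived_set_of topspace X = topspace X" "n \<ge> 2"
    and "f ` topspace X \<subseteq> topspace X" "multi_transitive_on (SFn n X) (SFn_map n X f)"
  shows "multi_transitive_on (Fn n X) (Fn_map f)"
proof (rule multi_transitive_on_transfer[OF assms(5), where \<Phi> = "\<lambda>U. SF_q n X ` (U - F1_set X)"])
  fix U
  assume "openin (Fn n X) U" "U \<noteq> {}"
  then show "openin (SFn n X) (SF_q n X ` (U - F1_set X)) \<and> SF_q n X ` (U - F1_set X) \<noteq> {}"
    using openin_SFn_image_non_singletons non_singleton_in_open_Fn assms(1-3) by blast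
next
  fix U V z j
  assume "openin (Fn n X) U" "openin (Fn n X) V"
    and "z \<in> SF_q n X ` (U - F1_set X)" "(SFn_map n X f ^^ j) z \<in> SF_q n X ` (V - F1_set X)"
  then obtain A B where "A \<in> U" "z = SF_q n X A" "B \<in> V" "B \<notin> F1_set X"
    and "(SFn_map n X f ^^ j) (SF_q n X A) = SF_q n X B"
    by blast
  moreover have "A \<in> Fn_set n X"
    using \<open>A \<in> U\<close> openin_subset[OF \<open>openin (Fn n X) U\<close>] by (auto simp: topspace_Fn)
  ultimately have "(Fn_map f ^^ j) A = B"
    using funpow_SFn_map_SF_q[OF assms(4)] SF_q_eq_non_singleton by metis
  with \<open>A \<in> U\<close> \<open>B \<in> V\<close> show "\<exists>x\<in>U. (Fn_map f ^^ j) x \<in> V"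
    by blast
qed

theorem theorem9:
  fixes X :: "'a topology" and n :: nat and f :: "'a \<Rightarrow> 'a"
  assumes "compactum X" and "n \<ge> 2" and "f ` topspace X \<subseteq> topspace X"
  shows "(multi_transitive_on (Fn n X) (Fn_map f) \<longleftrightarrow>
            multi_transitive_on (SFn n X) (SFn_map n X f)) \<and>
         (multi_transitive_on (Fn n X) (Fn_map f) \<longrightarrow> multi_transitive_on X f)"
proof -
  have "Hausdorff_space X" "X derived_set_of topspace X = topspace X"
    using assms(1) by (simp_all add: compactum_def)
  moreover have "n \<ge> 1"
    using assms(2) by simp
  ultimately show ?thesis
    using multi_transitive_on_from_Fn multi_transitive_on_SFn_if_Fn[OF assms(3)]
      multi_transitive_on_Fn_if_SFn[OF _ _ assms(2,3)] by blast
qed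

end
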